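(* Let $\mathbf G(\mathbf x_1),\ldots,\mathbf G(\mathbf x_N)$ be real $m\times s$ matrices such that the column space of the $m\times Ns$ matrix $(\mathbf G(\mathbf x_1),\ldots,\mathbf G(\mathbf x_N))$ is all of $\mathbb R^m$. Consider the following procedure (mKYM). Set $\mathcal S\gets\emptyset$ and $\mathbf P\gets\mathbf I_m$. Repeat: (1) choose any $\mathbf v\in\mathcal C(\mathbf P)$ with $\mathbf v\neq\mathbf 0_m$; (2) choose any $i^*\in\mathrm{argmax}_{i\in\{1,\ldots,N\}\setminus\mathcal S}\lVert\mathbf v^T\mathbf G(\mathbf x_i)\rVert^2$ (Euclidean norm); (3) set $\mathcal S\gets\mathcal S\cup\{i^*\}$; (4) if $|\mathcal S|=m$, stop the loop; (5) set $\widetilde{\mathbf G}\gets\mathbf P\mathbf G(\mathbf x_{i^*})$ and $\mathbf P\gets\mathbf P-\widetilde{\mathbf G}\widetilde{\mathbf G}^+$; until $\mathrm{tr}[\mathbf P]<0.5$. Finally output the design $\mathbf w$ that is uniform on $\{\mathbf x_i: i\in\mathcal S\}$, i.e., $w_i=1/|\mathcal S|$ for $i\in\mathcal S$ and $w_i=0$ otherwise. Then, for any choices made in steps (1) and (2), the procedure terminates with a set $\mathcal S$ of size at most $m$, and the output design $\mathbf w$ is nonsingular, i.e., $\mathbf M(\mathbf w)=\sum_{i=1}^N w_i\mathbf G(\mathbf x_i)\mathbf G^T(\mathbf x_i)$ is nonsingular.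
   Context: $\mathcal C(\mathbf A)$ denotes the column space of a matrix $\mathbf A$, and $\mathbf A^+$ its Moore–Penrose pseudoinverse. A design is a vector $\mathbf w\in\mathbb R^N$ with nonnegative components summing to $1$; it is nonsingular if its information matrix $\mathbf M(\mathbf w)$ is nonsingular. *)

theory Defs
  imports "HOL-Analysis.Analysis"
begin

definition col_space :: "real^'n^'m \<Rightarrow> (real^'m) set" where
  "col_space A = span (columns A)"

definition pinv :: "real^'n^'m \<Rightarrow> real^'m^'n" where
  "pinv A = (THE X. A ** X ** A = A \<and> X ** A ** X = X \<and>
                    transpose (A ** X) = A ** X \<and> transpose (X ** A) = X ** A)"

definition info_matrix :: "('i::finite \<Rightarrow> real^'s^'m) \<Rightarrow> ('i \<Rightarrow> real) \<Rightarrow> real^'m^'m" where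
  "info_matrix G w = (\<Sum>i\<in>UNIV. w i *\<^sub>R (G i ** transpose (G i)))"

definition is_design :: "('i::finite \<Rightarrow> real) \<Rightarrow> bool" where
  "is_design w \<longleftrightarrow> (\<forall>i. w i \<ge> 0) \<and> (\<Sum>i\<in>UNIV. w i) = 1"

definition nonsingular_design :: "('i::finite \<Rightarrow> real^'s^'m) \<Rightarrow> ('i \<Rightarrow> real) \<Rightarrow> bool" where
  "nonsingular_design G w \<longleftrightarrow> invertible (info_matrix G w)"

definition uniform_design :: "'i set \<Rightarrow> 'i \<Rightarrow> real" where
  "uniform_design S = (\<lambda>i. if i \<in> S then 1 / real (card S) else 0)"

definition mkym_choice :: "('i::finite \<Rightarrow> real^'s^'m) \<Rightarrow> 'i set \<Rightarrow> real^'m^'m \<Rightarrow> 'i \<Rightarrow> bool" where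
  "mkym_choice G S P i \<longleftrightarrow> (\<exists>v. v \<in> col_space P \<and> v \<noteq> 0 \<and> i \<notin> S \<and>
      (\<forall>j. j \<notin> S \<longrightarrow> (norm (v v* G j))\<^sup>2 \<le> (norm (v v* G i))\<^sup>2))"

definition mkym_update :: "('i::finite \<Rightarrow> real^'s^'m) \<Rightarrow> real^'m^'m \<Rightarrow> 'i \<Rightarrow> real^'m^'m" where
  "mkym_update G P i = P - (P ** G i) ** pinv (P ** G i)"

text \<open>One full loop iteration after which the loop continues
  (no break in step (4), and the until-condition tr P < 0.5 fails).\<close>
definition mkym_next :: "('i::finite \<Rightarrow> real^'s^'m) \<Rightarrow> ('i set \<times> (real^'m^'m)) \<Rightarrow> ('i set \<times> (real^'m^'m)) \<Rightarrow> bool" where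
  "mkym_next G st st' \<longleftrightarrow> (\<exists>i. mkym_choice G (fst st) (snd st) i \<and>
      fst st' = insert i (fst st) \<and> card (fst st') \<noteq> CARD('m) \<and>
      snd st' = mkym_update G (snd st) i \<and> \<not> (trace (snd st') < 1/2))"

text \<open>One loop iteration after which the loop ends (by the break in step (4) or by
  the until-condition), with final index set S'.\<close>
definition mkym_stop :: "('i::finite \<Rightarrow> real^'s^'m) \<Rightarrow> ('i set \<times> (real^'m^'m)) \<Rightarrow> 'i set \<Rightarrow> bool" where
  "mkym_stop G st S' \<longleftrightarrow> (\<exists>i. mkym_choice G (fst st) (snd st) i \<and>
      S' = insert i (fst st) \<and>
      (card S' = CARD('m) \<or> trace (mkym_update G (snd st) i) < 1/2))"

definition mkym_init :: "'i set \<times> (real^'m^'m)" where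
  "mkym_init = ({}, mat 1)"

definition mkym_reachable :: "('i::finite \<Rightarrow> real^'s^'m) \<Rightarrow> ('i set \<times> (real^'m^'m)) \<Rightarrow> bool" where
  "mkym_reachable G st \<longleftrightarrow> (mkym_next G)\<^sup>*\<^sup>* mkym_init st"

end

theory Submission
  imports Defs
begin

text \<open>
  Each iteration replaces \<open>P\<close> by \<open>P - H\<close>, where \<open>H = A A\<^sup>+\<close> is the orthogonal projector
  onto the range of \<open>A = P G(x\<^sub>i\<^sub>*)\<close>. Inductively, \<open>P\<close> is an orthogonal projector that
  annihilates every \<open>G(x\<^sub>j)\<close> with \<open>j \<in> S\<close>, the range of \<open>I - P\<close> lies in the span \<open>V\<^sub>S\<close> of
  the columns of these \<open>G(x\<^sub>j)\<close>, and \<open>tr P + |S| \<le> m\<close>. The last bound holds because the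
  greedy choice makes \<open>A \<noteq> 0\<close> (the chosen \<open>v \<in> C(P)\<close> is not orthogonal to all columns of
  all \<open>G(x\<^sub>j)\<close>), so \<open>H \<noteq> 0\<close> and a nonzero orthogonal projector has trace at least 1.
  When the loop stops, \<open>tr P < 1\<close>, so \<open>P = 0\<close> and \<open>V\<^sub>S = \<real>\<^sup>m\<close>; then the quadratic form
  of \<open>M(w)\<close>, a positive combination of the \<open>\<parallel>x\<^sup>T G(x\<^sub>i)\<parallel>\<^sup>2\<close> with \<open>i \<in> S\<close>, is definite.
\<close>

lemma matrix_diff_ldistrib: "(A::'a::ring_1^'n^'m) ** (B - C) = A ** B - A ** C"
  by (simp add: vec_eq_iff matrix_matrix_mult_def sum_subtractf algebra_simps)

lemma matrix_diff_rdistrib: "((A::'a::ring_1^'n^'m) - B) ** C = A ** C - B ** C"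
  by (simp add: vec_eq_iff matrix_matrix_mult_def sum_subtractf algebra_simps)

lemma transpose_diff: "transpose ((A::'a::ring_1^'n^'m) - B) = transpose A - transpose B"
  by (simp add: vec_eq_iff transpose_def)

lemma matrix_mul_0_right [simp]: "(A::'a::semiring_1^'n^'m) ** 0 = 0"
  by (simp add: matrix_matrix_mult_def vec_eq_iff)

lemma row_matrix_mult: "(A ** B) $ r = A $ r v* B"
  by (simp add: matrix_matrix_mult_def vector_matrix_mult_def vec_eq_iff mult.commute)

lemma trace_zero [simp]: "trace (0::'a::semiring_1^'n^'n) = 0"
  by (simp add: trace_def)

section \<open>The Moore-Penrose pseudoinverse\<close>

lemma symmetric_if_orthogonal_residual:
  fixes M :: "real^'n^'n"
  assumes res: "\<And>x y. inner (M *v x) (y - M *v y) = 0"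
  shows "transpose M = M"
proof -
  have "inner (transpose M *v x) y = inner (M *v x) y" for x y
  proof -
    have "inner (M *v x) y = inner (M *v x) (M *v y)"
      using res[of x y] by (simp add: inner_diff_right)
    also have "\<dots> = inner x (M *v y)"
      using res[of y x] by (simp add: inner_diff_right inner_commute)
    finally show ?thesis by (simp add: dot_lmul_matrix)
  qed
  then have "transpose M *v x = M *v x" for x
    by (metis vector_eq_rdot)
  then show ?thesis by (simp add: matrix_eq)
qed

lemma gram_kernel:
  fixes A :: "real^'n^'m"
  assumes "(A *v x) v* A = 0"
  shows "A *v x = 0"
proof -
  have "inner (A *v x) (A *v x) = inner x ((A *v x) v* A)"
    by (metis dot_lmul_matrix inner_commute)
  then show ?thesis using assms by simp
qed

lemma gram_left_inverse_on_row_space: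
  fixes A :: "real^'n^'m"
  obtains g where "linear g" "\<And>y. g y \<in> range (\<lambda>u. u v* A)"
    "\<And>v. v \<in> range (\<lambda>u. u v* A) \<Longrightarrow> g ((A *v v) v* A) = v"
    "\<And>y. (A *v g (y v* A)) v* A = y v* A"
proof -
  define N where "N x = (A *v x) v* A" for x
  define Q where "Q = range (\<lambda>u. u v* A)"
  have lin_N: "linear N"
    unfolding N_def using matrix_vector_mul_linear[of "transpose A ** A"]
    by (simp add: matrix_vector_mul_assoc[symmetric])
  have Q: "subspace Q"
    unfolding Q_def
    using linear_subspace_image[OF matrix_vector_mul_linear[of "transpose A"] subspace_UNIV]
    by simp
  have Q_ker: "x = 0" if "x \<in> Q" "A *v x = 0" for x
  proof -
    obtain u where "x = u v* A" using \<open>x \<in> Q\<close> unfolding Q_def by blast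
    then have "inner x x = inner u (A *v x)" by (simp add: dot_lmul_matrix)
    then show ?thesis using \<open>A *v x = 0\<close> by simp
  qed
  have inj_N: "inj_on N Q"
    using Q Q_ker gram_kernel[of A] by (simp add: linear_inj_on_iff_eq_0[OF lin_N] N_def)
  have NQ: "N ` Q = Q"
  proof (rule subspace_dim_equal)
    show "subspace (N ` Q)" by (rule linear_subspace_image[OF lin_N Q])
    show "N ` Q \<subseteq> Q" by (auto simp: N_def Q_def)
    show "dim Q \<le> dim (N ` Q)"
      using dim_image_eq[OF lin_N, of Q] inj_N Q by (simp add: span_eq_iff[THEN iffD2])
  qed (rule Q)
  obtain g where gQ: "range g \<subseteq> Q" and "linear g" and gN: "\<And>v. v \<in> Q \<Longrightarrow> g (N v) = v"
    using linear_exists_left_inverse_on[OF lin_N Q inj_N] by blast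
  moreover have "N (g (y v* A)) = y v* A" for y
  proof -
    have "y v* A \<in> N ` Q" using NQ by (auto simp: Q_def)
    then show ?thesis using gN by auto
  qed
  ultimately show ?thesis
    using that unfolding N_def Q_def by blast
qed

text \<open>The construction \<open>X = (A\<^sup>T A)\<^sup>-\<^sup>1 A\<^sup>T\<close>, with the inverse taken on the row space.\<close>
lemma pinv_exists:
  fixes A :: "real^'n^'m"
  shows "\<exists>X. A ** X ** A = A \<and> X ** A ** X = X \<and>
    transpose (A ** X) = A ** X \<and> transpose (X ** A) = X ** A"
proof -
  obtain g where lin_g: "linear g" and g_row: "\<And>y. g y \<in> range (\<lambda>u. u v* A)"
    and g_left: "\<And>v. v \<in> range (\<lambda>u. u v* A) \<Longrightarrow> g ((A *v v) v* A) = v"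
    and g_normal: "\<And>y. (A *v g (y v* A)) v* A = y v* A"
    using gram_left_inverse_on_row_space[of A] by blast
  define X where "X = matrix g ** transpose A"
  have X: "X *v y = g (y v* A)" for y
    by (simp add: X_def lin_g matrix_works flip: matrix_vector_mul_assoc)
  have AXA: "A *v (X *v (A *v x)) = A *v x" for x
  proof -
    have "(A *v (X *v (A *v x) - x)) v* A = 0"
      using g_normal[of "A *v x"]
      by (simp add: X matrix_vector_mult_diff_distrib vector_matrix_mult_diff_distrib)
    then have "A *v (X *v (A *v x) - x) = 0" by (rule gram_kernel)
    then show ?thesis by (simp add: matrix_vector_mult_diff_distrib)
  qed
  have XAX: "X *v (A *v (X *v y)) = X *v y" for y
    using g_left g_row by (simp add: X)
  have "inner (A *v (X *v y)) (y' - A *v (X *v y')) = 0" for y y'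
  proof -
    have "(y' - A *v (X *v y')) v* A = 0"
      using g_normal[of y'] by (simp add: X vector_matrix_mult_diff_distrib)
    then show ?thesis by (metis dot_lmul_matrix inner_commute inner_zero_left)
  qed
  then have AX: "transpose (A ** X) = A ** X"
    by (intro symmetric_if_orthogonal_residual) (simp add: matrix_vector_mul_assoc[symmetric])
  have "inner (X *v (A *v x)) (x' - X *v (A *v x')) = 0" for x x'
  proof -
    obtain u where "X *v (A *v x) = u v* A" using g_row by (metis X imageE)
    then show ?thesis
      using AXA[of x'] by (simp add: dot_lmul_matrix matrix_vector_mult_diff_distrib)
  qed
  then have XA: "transpose (X ** A) = X ** A"
    by (intro symmetric_if_orthogonal_residual) (simp add: matrix_vector_mul_assoc[symmetric])
  have "A ** X ** A = A" "X ** A ** X = X"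
    by (simp_all add: matrix_eq AXA XAX flip: matrix_vector_mul_assoc)
  then show ?thesis using AX XA by blast
qed

lemma pinv_unique:
  fixes A :: "real^'n^'m" and X Y :: "real^'m^'n"
  assumes X: "A ** X ** A = A" "X ** A ** X = X"
      "transpose (A ** X) = A ** X" "transpose (X ** A) = X ** A"
    and Y: "A ** Y ** A = A" "Y ** A ** Y = Y"
      "transpose (A ** Y) = A ** Y" "transpose (Y ** A) = Y ** A"
  shows "X = Y"
proof -
  have AY: "transpose A = transpose A ** (A ** Y)"
    by (metis Y(1) Y(3) matrix_transpose_mul)
  have XA: "transpose A = (X ** A) ** transpose A"
    by (metis X(1) X(4) matrix_transpose_mul matrix_mul_assoc)
  have "X = X ** (transpose X ** transpose A)"
    by (metis X(2) X(3) matrix_transpose_mul matrix_mul_assoc)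
  also have "\<dots> = X ** (transpose X ** (transpose A ** (A ** Y)))"
    using AY by simp
  also have "\<dots> = X ** A ** Y"
    by (metis X(2) X(3) matrix_transpose_mul matrix_mul_assoc)
  finally have X_eq: "X = X ** A ** Y" .
  have "Y = (transpose A ** transpose Y) ** Y"
    by (metis Y(2) Y(4) matrix_transpose_mul)
  also have "\<dots> = ((X ** A) ** transpose A ** transpose Y) ** Y"
    using XA by simp
  also have "\<dots> = X ** A ** Y"
    by (metis Y(2) Y(4) matrix_transpose_mul matrix_mul_assoc)
  finally show ?thesis using X_eq by simp
qed

lemma pinv_penrose:
  fixes A :: "real^'n^'m"
  shows "A ** pinv A ** A = A \<and> pinv A ** A ** pinv A = pinv A \<and>
    transpose (A ** pinv A) = A ** pinv A \<and> transpose (pinv A ** A) = pinv A ** A"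
  unfolding pinv_def
  by (rule theI') (use pinv_exists[of A] pinv_unique[of A] in blast)

section \<open>Orthogonal projectors\<close>

definition orthogonal_projector :: "real^'n^'n \<Rightarrow> bool" where
  "orthogonal_projector P \<longleftrightarrow> transpose P = P \<and> P ** P = P"

lemma orthogonal_projector_pinv: "orthogonal_projector (A ** pinv A)"
  using pinv_penrose[of A] unfolding orthogonal_projector_def by (metis matrix_mul_assoc)

lemma orthogonal_projector_diff:
  assumes P: "orthogonal_projector P" and H: "orthogonal_projector H" and PH: "P ** H = H"
  shows "orthogonal_projector (P - H)"
proof -
  have "H ** P = H"
    using P H PH unfolding orthogonal_projector_def by (metis matrix_transpose_mul)
  then show ?thesis
    using P H PH unfolding orthogonal_projector_def
    by (simp add: transpose_diff matrix_diff_ldistrib matrix_diff_rdistrib)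
qed

lemma idempotent_fixes_col_space:
  fixes P :: "real^'n^'n"
  assumes "P ** P = P" and "v \<in> col_space P"
  shows "P *v v = v"
proof -
  have "span (columns P) \<subseteq> {w. P *v w = w}"
  proof (rule span_minimal)
    show "columns P \<subseteq> {w. P *v w = w}"
      using assms(1)
      by (auto simp: columns_def matrix_vector_mult_basis[symmetric] matrix_vector_mul_assoc)
    show "subspace {w. P *v w = w}"
      by (auto simp: subspace_def matrix_vector_right_distrib matrix_vector_mult_scaleR)
  qed
  then show ?thesis using assms(2) unfolding col_space_def by blast
qed

text \<open>\<open>tr P\<close> is the squared Frobenius norm of \<open>P\<close>, which dominates \<open>\<parallel>P u\<parallel>\<^sup>2 / \<parallel>u\<parallel>\<^sup>2\<close> by
  Cauchy-Schwarz on each row; take \<open>u\<close> in the range of \<open>P\<close>.\<close>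
lemma one_le_trace_orthogonal_projector:
  fixes P :: "real^'n^'n"
  assumes P: "orthogonal_projector P" and "P \<noteq> 0"
  shows "1 \<le> trace P"
proof -
  have sym: "P$k$j = P$j$k" for j k
    using P unfolding orthogonal_projector_def by (metis transpose_def vec_lambda_beta)
  have trace_rows: "trace P = (\<Sum>j\<in>UNIV. inner (P$j) (P$j))"
  proof -
    have "P$j$j = inner (P$j) (P$j)" for j
    proof -
      have "P$j$j = (P ** P)$j$j" using P by (simp add: orthogonal_projector_def)
      also have "\<dots> = inner (P$j) (P$j)"
        by (simp add: matrix_matrix_mult_def inner_vec_def sym)
      finally show ?thesis .
    qed
    then show ?thesis by (simp add: trace_def)
  qed
  obtain x where "P *v x \<noteq> 0" using \<open>P \<noteq> 0\<close> by (metis matrix_eq matrix_vector_mult_0)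
  define u where "u = P *v x"
  have "P *v u = u"
    using P by (simp add: u_def orthogonal_projector_def matrix_vector_mul_assoc)
  then have "inner u u = inner (P *v u) (P *v u)"
    by simp
  also have "\<dots> = (\<Sum>j\<in>UNIV. (inner (P$j) u)\<^sup>2)"
    by (simp add: inner_vec_def matrix_vector_mult_def power2_eq_square)
  also have "\<dots> \<le> (\<Sum>j\<in>UNIV. inner (P$j) (P$j) * inner u u)"
    by (intro sum_mono Cauchy_Schwarz_ineq)
  also have "\<dots> = trace P * inner u u"
    by (simp add: trace_rows sum_distrib_right)
  finally show ?thesis
    using \<open>P *v x \<noteq> 0\<close> by (simp add: u_def)
qed

definition deflate :: "real^'m^'m \<Rightarrow> real^'s^'m \<Rightarrow> real^'m^'m" where
  "deflate P B = P - (P ** B) ** pinv (P ** B)"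

lemma range_projector_absorbed:
  fixes P :: "real^'m^'m" and B :: "real^'s^'m"
  assumes P: "orthogonal_projector P"
  defines "H \<equiv> (P ** B) ** pinv (P ** B)"
  shows "P ** H = H" "H ** P = H" "H ** (P ** B) = P ** B"
proof -
  show PH: "P ** H = H"
    using P unfolding H_def orthogonal_projector_def by (metis matrix_mul_assoc)
  show "H ** P = H"
    using P orthogonal_projector_pinv[of "P ** B"] PH
    unfolding H_def orthogonal_projector_def by (metis matrix_transpose_mul)
  show "H ** (P ** B) = P ** B"
    using pinv_penrose[of "P ** B"] unfolding H_def by blast
qed

lemma orthogonal_projector_deflate:
  "orthogonal_projector P \<Longrightarrow> orthogonal_projector (deflate P B)"
  unfolding deflate_def
  by (intro orthogonal_projector_diff orthogonal_projector_pinv range_projector_absorbed)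

lemma deflate_annihilates:
  assumes "orthogonal_projector P"
  shows "deflate P B ** B = 0"
proof -
  let ?H = "(P ** B) ** pinv (P ** B)"
  have "?H ** B = ?H ** (P ** B)"
    using range_projector_absorbed(2)[OF assms, of B] by (metis matrix_mul_assoc)
  then show ?thesis
    using range_projector_absorbed(3)[OF assms, of B] by (simp add: deflate_def matrix_diff_rdistrib)
qed

lemma deflate_preserves_annihilation:
  assumes "orthogonal_projector P" and "P ** C = 0"
  shows "deflate P B ** C = 0"
proof -
  let ?H = "(P ** B) ** pinv (P ** B)"
  have "?H ** C = ?H ** (P ** C)"
    using range_projector_absorbed(2)[OF assms(1), of B] by (metis matrix_mul_assoc)
  then show ?thesis
    using assms(2) by (simp add: deflate_def matrix_diff_rdistrib)
qed

lemma trace_deflate_le: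
  assumes P: "orthogonal_projector P" and "P ** B \<noteq> 0"
  shows "trace (deflate P B) \<le> trace P - 1"
proof -
  let ?H = "(P ** B) ** pinv (P ** B)"
  have "?H \<noteq> 0"
    using range_projector_absorbed(3)[OF P, of B] \<open>P ** B \<noteq> 0\<close> by force
  then have "1 \<le> trace ?H"
    by (intro one_le_trace_orthogonal_projector orthogonal_projector_pinv)
  then show ?thesis by (simp add: deflate_def trace_sub)
qed

lemma deflate_residual:
  "x - deflate P B *v x = (x - P *v x) + P *v (B *v (pinv (P ** B) *v x))"
  by (simp add: deflate_def matrix_vector_mult_diff_rdistrib matrix_vector_mul_assoc
      matrix_mul_assoc)

section \<open>Information matrices\<close>

definition design_span :: "('i \<Rightarrow> real^'s^'m) \<Rightarrow> 'i set \<Rightarrow> (real^'m) set" where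
  "design_span G S = span (\<Union>i\<in>S. columns (G i))"

lemma design_span_mono: "S \<subseteq> T \<Longrightarrow> design_span G S \<subseteq> design_span G T"
  unfolding design_span_def by (intro span_mono) auto

lemma matrix_vector_mult_in_design_span: "i \<in> S \<Longrightarrow> G i *v y \<in> design_span G S"
  using design_span_mono[of "{i}" S G] matrix_vector_mult_in_columnspace[of "G i" y]
  by (auto simp: design_span_def)

lemma orthogonal_design_span:
  assumes "\<And>j. j \<in> S \<Longrightarrow> x v* G j = 0" and "y \<in> design_span G S"
  shows "inner x y = 0"
proof -
  have "orthogonal x y" using assms(2) unfolding design_span_def
  proof (rule orthogonal_to_span)
    fix z assume "z \<in> (\<Union>i\<in>S. columns (G i))"
    then obtain j k where "j \<in> S" and z: "z = column k (G j)"
      by (auto simp: columns_def)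
    have "(x v* G j)$k = 0" using assms(1)[OF \<open>j \<in> S\<close>] by simp
    then show "orthogonal x z"
      by (simp add: z orthogonal_def vector_matrix_mult_def inner_vec_def column_def mult.commute)
  qed
  then show ?thesis by (simp add: orthogonal_def)
qed

lemma sum_matrix_vector_mult:
  fixes f :: "'a \<Rightarrow> real^'n^'m"
  shows "finite A \<Longrightarrow> sum f A *v x = (\<Sum>i\<in>A. f i *v x)"
  by (induction A rule: finite_induct) (simp_all add: matrix_vector_mult_add_rdistrib)

lemma quadratic_form_info_matrix:
  "inner x (info_matrix G w *v x) = (\<Sum>i\<in>UNIV. w i * inner (x v* G i) (x v* G i))"
proof -
  have "inner x ((G i ** transpose (G i)) *v x) = inner (x v* G i) (x v* G i)" for i
    by (simp add: dot_lmul_matrix flip: matrix_vector_mul_assoc)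
  then show ?thesis
    by (simp add: info_matrix_def sum_matrix_vector_mult inner_sum_right
        flip: scaleR_matrix_vector_assoc)
qed

lemma invertible_info_matrix:
  fixes G :: "'i::finite \<Rightarrow> real^'s^'m"
  assumes w: "\<And>i. 0 \<le> w i" and span: "design_span G {i. 0 < w i} = UNIV"
  shows "invertible (info_matrix G w)"
proof -
  have "x = 0" if "info_matrix G w *v x = 0" for x
  proof -
    have "(\<Sum>i\<in>UNIV. w i * inner (x v* G i) (x v* G i)) = 0"
      using that by (simp flip: quadratic_form_info_matrix)
    then have "\<forall>i\<in>UNIV. w i * inner (x v* G i) (x v* G i) = 0"
      by (subst (asm) sum_nonneg_eq_0_iff) (auto intro: mult_nonneg_nonneg w)
    then have "x v* G i = 0" if "0 < w i" for i
      using that by force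
    then have "inner x x = 0"
      using orthogonal_design_span[of "{i. 0 < w i}" x G x] span by blast
    then show ?thesis by simp
  qed
  then show ?thesis
    by (simp add: matrix_left_invertible_ker invertible_left_inverse)
qed

lemma is_design_uniform_design:
  "finite S \<Longrightarrow> S \<noteq> {} \<Longrightarrow> is_design (uniform_design (S::'i::finite set))"
  by (simp add: is_design_def uniform_design_def sum.If_cases)

lemma nonsingular_uniform_design:
  fixes G :: "'i::finite \<Rightarrow> real^'s^'m"
  assumes "S \<noteq> {}" and "design_span G S = UNIV"
  shows "nonsingular_design G (uniform_design S)"
proof -
  have "{i. 0 < uniform_design S i} = S"
    using assms(1) by (auto simp: uniform_design_def card_gt_0_iff)
  then show ?thesis
    using assms(2) unfolding nonsingular_design_def
    by (intro invertible_info_matrix) (simp_all add: uniform_design_def)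
qed

section \<open>The mKYM procedure\<close>

definition mkym_invariant :: "('i::finite \<Rightarrow> real^'s^'m) \<Rightarrow> 'i set \<Rightarrow> real^'m^'m \<Rightarrow> bool" where
  "mkym_invariant G S P \<longleftrightarrow> orthogonal_projector P \<and> (\<forall>j\<in>S. P ** G j = 0) \<and>
     (\<forall>x. x - P *v x \<in> design_span G S) \<and> trace P + real (card S) \<le> real CARD('m)"

lemma mkym_update_eq_deflate: "mkym_update G P i = deflate P (G i)"
  by (simp add: mkym_update_def deflate_def)

lemma mkym_invariant_init: "mkym_invariant G {} (mat 1)"
  by (simp add: mkym_invariant_def orthogonal_projector_def trace_I design_span_def span_zero)

lemma mkym_choice_not_annihilated:
  fixes G :: "'i::finite \<Rightarrow> real^'s^'m"
  assumes span: "design_span G UNIV = UNIV" and P: "orthogonal_projector P"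
    and PS: "\<forall>j\<in>S. P ** G j = 0" and choice: "mkym_choice G S P i"
  shows "P ** G i \<noteq> 0"
proof -
  obtain v where v: "v \<in> col_space P" "v \<noteq> 0"
    and greedy: "\<And>j. j \<notin> S \<Longrightarrow> (norm (v v* G j))\<^sup>2 \<le> (norm (v v* G i))\<^sup>2"
    using choice unfolding mkym_choice_def by blast
  have "P *v v = v"
    using P v(1) by (intro idempotent_fixes_col_space) (simp_all add: orthogonal_projector_def)
  then have vP: "v v* P = v"
    using P unfolding orthogonal_projector_def by (metis transpose_matrix_vector)
  then have vPG: "v v* (P ** G j) = v v* G j" for j
    by (metis vector_matrix_mul_assoc)
  have vS: "v v* G j = 0" if "j \<in> S" for j
    using PS that vPG[of j] by simp
  have "\<exists>j. v v* G j \<noteq> 0"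
  proof (rule ccontr)
    assume "\<not> ?thesis"
    then have "inner v v = 0"
      using orthogonal_design_span[of UNIV v G v] span by simp
    then show False using v(2) by simp
  qed
  then obtain j where j: "v v* G j \<noteq> 0" by blast
  then have "j \<notin> S" using vS by blast
  then have "(norm (v v* G j))\<^sup>2 \<le> (norm (v v* G i))\<^sup>2" by (rule greedy)
  with j have "v v* G i \<noteq> 0" by auto
  then show ?thesis
    by (metis vPG vector_matrix_mult_0_right)
qed

lemma mkym_invariant_update:
  fixes G :: "'i::finite \<Rightarrow> real^'s^'m"
  assumes span: "design_span G UNIV = UNIV" and inv: "mkym_invariant G S P"
    and choice: "mkym_choice G S P i"
  shows "mkym_invariant G (insert i S) (mkym_update G P i)"
proof -
  have P: "orthogonal_projector P" and PS: "\<forall>j\<in>S. P ** G j = 0"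
    and res: "\<And>x. x - P *v x \<in> design_span G S"
    and bound: "trace P + real (card S) \<le> real CARD('m)"
    using inv unfolding mkym_invariant_def by blast+
  have "i \<notin> S" using choice unfolding mkym_choice_def by blast
  have res': "x - P *v x \<in> design_span G (insert i S)" for x
    using res design_span_mono[of S "insert i S" G] by blast
  have "x - deflate P (G i) *v x \<in> design_span G (insert i S)" for x
  proof -
    define g where "g = G i *v (pinv (P ** G i) *v x)"
    have "g \<in> design_span G (insert i S)"
      unfolding g_def by (rule matrix_vector_mult_in_design_span) simp
    then have "g - (g - P *v g) \<in> design_span G (insert i S)"
      using res'[of g] unfolding design_span_def by (rule span_diff)
    then have "(x - P *v x) + P *v g \<in> design_span G (insert i S)"
      using res'[of x] unfolding design_span_def by (simp add: span_add)
    then show ?thesis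
      unfolding deflate_residual g_def .
  qed
  moreover have "deflate P (G i) ** G j = 0" if "j \<in> insert i S" for j
    using that PS deflate_annihilates[OF P] deflate_preserves_annihilation[OF P] by blast
  moreover have "trace (deflate P (G i)) + real (card (insert i S)) \<le> real CARD('m)"
    using trace_deflate_le[OF P mkym_choice_not_annihilated[OF span P PS choice]] bound \<open>i \<notin> S\<close>
    by simp
  ultimately show ?thesis
    using orthogonal_projector_deflate[OF P]
    unfolding mkym_invariant_def mkym_update_eq_deflate by blast
qed

lemma mkym_reachable_invariant:
  fixes G :: "'i::finite \<Rightarrow> real^'s^'m"
  assumes span: "design_span G UNIV = UNIV" and "mkym_reachable G st"
  shows "mkym_invariant G (fst st) (snd st) \<and> snd st \<noteq> 0"
  using \<open>mkym_reachable G st\<close> unfolding mkym_reachable_def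
proof (induction rule: rtranclp_induct)
  case base
  have "(mat 1 :: real^'m^'m) \<noteq> 0"
  proof
    assume "(mat 1 :: real^'m^'m) = 0"
    then have "trace (mat 1 :: real^'m^'m) = 0" by simp
    then show False by (simp add: trace_I)
  qed
  then show ?case by (simp add: mkym_init_def mkym_invariant_init)
next
  case (step st st')
  obtain i where choice: "mkym_choice G (fst st) (snd st) i"
    and S: "fst st' = insert i (fst st)" and P: "snd st' = mkym_update G (snd st) i"
    and continue: "\<not> trace (snd st') < 1/2"
    using step.hyps(2) unfolding mkym_next_def by blast
  have "mkym_invariant G (fst st') (snd st')"
    unfolding S P using mkym_invariant_update[OF span _ choice] step.IH by blast
  moreover have "snd st' \<noteq> 0"
  proof
    assume "snd st' = 0"
    with continue show False by simp
  qed
  ultimately show ?case by blast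
qed

lemma mkym_choice_exists:
  fixes G :: "'i::finite \<Rightarrow> real^'s^'m"
  assumes span: "design_span G UNIV = UNIV" and inv: "mkym_invariant G S P" and "P \<noteq> 0"
  shows "\<exists>i. mkym_choice G S P i"
proof -
  have "S \<noteq> UNIV"
  proof
    assume "S = UNIV"
    have "P $ r = 0" for r
    proof -
      have "P $ r v* G j = 0" for j
        using inv \<open>S = UNIV\<close> row_matrix_mult[of P "G j" r]
        unfolding mkym_invariant_def by simp
      then have "inner (P $ r) (P $ r) = 0"
        using orthogonal_design_span[of UNIV "P $ r" G "P $ r"] span by simp
      then show ?thesis by simp
    qed
    then show False using \<open>P \<noteq> 0\<close> by (simp add: vec_eq_iff)
  qed
  obtain x where "P *v x \<noteq> 0"
    using \<open>P \<noteq> 0\<close> by (metis matrix_eq matrix_vector_mult_0)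
  moreover have "P *v x \<in> col_space P"
    by (simp add: col_space_def matrix_vector_mult_in_columnspace)
  moreover define g where "g j = (norm ((P *v x) v* G j))\<^sup>2" for j
  have fin: "finite (g ` (- S))" and ne: "g ` (- S) \<noteq> {}"
    using \<open>S \<noteq> UNIV\<close> by auto
  obtain i where "i \<notin> S" and "g i = Max (g ` (- S))"
    using Max_in[OF fin ne] by auto
  then have "\<forall>j. j \<notin> S \<longrightarrow> g j \<le> g i"
    using Max_ge[OF fin] by simp
  ultimately show ?thesis
    using \<open>i \<notin> S\<close> unfolding mkym_choice_def g_def by blast
qed

lemma mkym_next_card: "mkym_next G st st' \<Longrightarrow> card (fst st') = Suc (card (fst st))"
  unfolding mkym_next_def mkym_choice_def by auto

lemma mkym_no_infinite_run:
  fixes G :: "'i::finite \<Rightarrow> real^'s^'m"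
  shows "\<not> (\<exists>f. f 0 = mkym_init \<and> (\<forall>k. mkym_next G (f k) (f (Suc k))))"
proof
  assume "\<exists>f. f 0 = mkym_init \<and> (\<forall>k. mkym_next G (f k) (f (Suc k)))"
  then obtain f where "f 0 = mkym_init" and run: "\<And>k. mkym_next G (f k) (f (Suc k))"
    by blast
  then have "card (fst (f k)) = k" for k
    by (induction k) (simp_all add: mkym_init_def mkym_next_card[OF run])
  moreover have "card (fst (f (Suc CARD('i)))) \<le> CARD('i)"
    by (rule card_mono) auto
  ultimately show False by simp
qed

lemma mkym_stop_spans:
  fixes G :: "'i::finite \<Rightarrow> real^'s^'m"
  assumes span: "design_span G UNIV = UNIV"
    and "mkym_reachable G st" and "mkym_stop G st S"
  shows "card S \<le> CARD('m)" "S \<noteq> {}" "design_span G S = UNIV"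
proof -
  obtain i where choice: "mkym_choice G (fst st) (snd st) i" and S: "S = insert i (fst st)"
    and stop: "card S = CARD('m) \<or> trace (mkym_update G (snd st) i) < 1/2"
    using \<open>mkym_stop G st S\<close> unfolding mkym_stop_def by blast
  define P where "P = mkym_update G (snd st) i"
  have "mkym_invariant G S P"
    unfolding S P_def
    using mkym_invariant_update[OF span _ choice] mkym_reachable_invariant[OF assms(1,2)] by blast
  then have P: "orthogonal_projector P" and res: "\<And>x. x - P *v x \<in> design_span G S"
    and bound: "trace P + real (card S) \<le> real CARD('m)"
    unfolding mkym_invariant_def by blast+
  from stop have "trace P < 1"
  proof
    assume "card S = CARD('m)"
    then show ?thesis using bound by simp
  next
    assume "trace (mkym_update G (snd st) i) < 1/2"
    then show ?thesis by (simp add: P_def)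
  qed
  then have "P = 0"
    by (metis one_le_trace_orthogonal_projector[OF P] not_le)
  then show "card S \<le> CARD('m)" and "design_span G S = UNIV"
    using bound res by auto
  show "S \<noteq> {}" using S by blast
qed

theorem theorem2:
  fixes G :: "'i::finite \<Rightarrow> real^'s^'m"
  assumes "span (\<Union>i. columns (G i)) = UNIV"
  shows "\<not> (\<exists>f. f 0 = mkym_init \<and> (\<forall>k. mkym_next G (f k) (f (Suc k))))
    \<and> (\<forall>st. mkym_reachable G st \<longrightarrow> (\<exists>i. mkym_choice G (fst st) (snd st) i))
    \<and> (\<forall>st S. mkym_reachable G st \<longrightarrow> mkym_stop G st S \<longrightarrow>
           card S \<le> CARD('m) \<and> is_design (uniform_design S) \<and>
           nonsingular_design G (uniform_design S))"
proof -
  have span: "design_span G UNIV = UNIV"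
    using assms unfolding design_span_def .
  show ?thesis
  proof (intro conjI allI impI)
    show "\<not> (\<exists>f. f 0 = mkym_init \<and> (\<forall>k. mkym_next G (f k) (f (Suc k))))"
      by (rule mkym_no_infinite_run)
  next
    fix st
    assume "mkym_reachable G st"
    then have "mkym_invariant G (fst st) (snd st)" and "snd st \<noteq> 0"
      using mkym_reachable_invariant[OF span] by auto
    then show "\<exists>i. mkym_choice G (fst st) (snd st) i"
      by (rule mkym_choice_exists[OF span])
  next
    fix st S
    assume "mkym_reachable G st" and "mkym_stop G st S"
    note S = mkym_stop_spans[OF span this]
    show "card S \<le> CARD('m)"
      by (rule S(1))
    show "is_design (uniform_design S)"
      using S(2) by (simp add: is_design_uniform_design)
    show "nonsingular_design G (uniform_design S)"
      using S(2,3) by (rule nonsingular_uniform_design)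
  qed
qed

end
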